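(* Let $\Delta$ be an integer with $\Delta\ge 3$ and let $\varepsilon_{\Delta} = \tan(\pi/(4 (\Delta-1)))$ (so $\varepsilon_\Delta\in(0,1)$). Let $G = (V, E)$ be a graph of maximum degree at most $\Delta$. Then $Z_{\mathrm{Ising}}(G; \beta) \ne 0$ for every $\beta \in \mathbb{C}$ with $\lvert \beta - 1\rvert / \lvert \beta + 1 \rvert \le \varepsilon_\Delta$.
   Context: Graphs are undirected and may have multiple edges or loops. For a graph $G=(V,E)$ and $\beta\in\mathbb{C}$, the partition function of the Ising model is $Z_{\mathrm{Ising}}(G;\beta)=\sum_{\sigma\colon V\to\{0,1\}}\beta^{m(\sigma)}$, where $m(\sigma)$ is the number of edges of $G$ whose two endpoints receive the same value under $\sigma$ (monochromatic edges). *)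

theory Defs
  imports "HOL-Analysis.Analysis"
begin

definition is_multigraph :: "'v set \<Rightarrow> 'e set \<Rightarrow> ('e \<Rightarrow> 'v \<times> 'v) \<Rightarrow> bool" where
  "is_multigraph V E ends \<longleftrightarrow> finite V \<and> finite E \<and>
     (\<forall>e\<in>E. fst (ends e) \<in> V \<and> snd (ends e) \<in> V)"

text \<open>Degree of a vertex; a loop contributes 2.\<close>
definition degree :: "'e set \<Rightarrow> ('e \<Rightarrow> 'v \<times> 'v) \<Rightarrow> 'v \<Rightarrow> nat" where
  "degree E ends v = card {e\<in>E. fst (ends e) = v} + card {e\<in>E. snd (ends e) = v}"

definition mono_edges :: "'e set \<Rightarrow> ('e \<Rightarrow> 'v \<times> 'v) \<Rightarrow> ('v \<Rightarrow> nat) \<Rightarrow> nat" where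
  "mono_edges E ends \<sigma> = card {e\<in>E. \<sigma> (fst (ends e)) = \<sigma> (snd (ends e))}"

definition Z_Ising :: "'v set \<Rightarrow> 'e set \<Rightarrow> ('e \<Rightarrow> 'v \<times> 'v) \<Rightarrow> complex \<Rightarrow> complex" where
  "Z_Ising V E ends \<beta> = (\<Sum>\<sigma>\<in>(V \<rightarrow>\<^sub>E {0::nat, 1}). \<beta> ^ mono_edges E ends \<sigma>)"

end

theory Submission
  imports Defs
begin

(* Put beta = (1 + t) / (1 - t) and alpha = pi / (2 (Delta - 1)), so that |t| <= tan (alpha / 2).
   The Cayley transform z \<mapsto> (1 + z) / (1 - z) maps the disc |z| <= tan (alpha / 2) into the
   sector |arg w| <= alpha; hence beta, 1 / beta and the Moebius map R \<mapsto> (beta R + 1) / (R + beta)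
   on the closed right half-plane all take values in that sector.

   Induction on the number of free vertices shows, for every boundary condition, that the partition
   function is nonzero and that for a free vertex u of degree d the ratio Z(u = 0) / Z(u = 1) lies in
   the sector |arg w| <= d alpha. This ratio telescopes over the half-edges at u, switched from 0
   to 1 one at a time. Switching the half-edge of an edge e = uy multiplies it by a number in the
   sector |arg w| <= alpha: summing out the spin of y, that number is the Moebius map applied to
   the ratio at y in the graph without e, where y has degree at most Delta - 1, so that ratio lies
   in the sector of half-angle (Delta - 1) alpha = pi / 2, the right half-plane. Finally
   Z = Z(u = 1) (1 + Z(u = 0) / Z(u = 1)) is nonzero because d alpha <= Delta alpha < pi. *)

definition in_sector :: "real \<Rightarrow> complex \<Rightarrow> bool" where
  "in_sector a w \<longleftrightarrow> (\<exists>r \<theta>. 0 < r \<and> \<bar>\<theta>\<bar> \<le> a \<and> w = rcis r \<theta>)"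

lemma in_sector_mult:
  assumes "in_sector a w" and "in_sector b z"
  shows "in_sector (a + b) (w * z)"
proof -
  obtain r \<theta> r' \<theta>' where "0 < r" "\<bar>\<theta>\<bar> \<le> a" "w = rcis r \<theta>"
    and "0 < r'" "\<bar>\<theta>'\<bar> \<le> b" "z = rcis r' \<theta>'"
    using assms unfolding in_sector_def by blast
  then show ?thesis
    unfolding in_sector_def
    by (intro exI[of _ "r * r'"] exI[of _ "\<theta> + \<theta>'"]) (auto simp: rcis_mult)
qed

lemma in_sector_mono: "in_sector a w \<Longrightarrow> a \<le> b \<Longrightarrow> in_sector b w"
  unfolding in_sector_def by force

lemma in_sector_1: "0 \<le> a \<Longrightarrow> in_sector a 1"
  unfolding in_sector_def by (intro exI[of _ 1] exI[of _ 0]) auto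

lemma in_sector_nonzero: "in_sector a w \<Longrightarrow> w \<noteq> 0"
  unfolding in_sector_def by auto

lemma in_sector_Re_nonneg: "in_sector a w \<Longrightarrow> a \<le> pi/2 \<Longrightarrow> 0 \<le> Re w"
  unfolding in_sector_def by (auto intro!: cos_ge_zero mult_nonneg_nonneg)

lemma in_sector_1_plus_nonzero:
  assumes "in_sector a w" and "a < pi"
  shows "1 + w \<noteq> 0"
proof
  assume "1 + w = 0"
  obtain r \<theta> where r: "0 < r" and \<theta>: "\<bar>\<theta>\<bar> < pi" and w: "w = rcis r \<theta>"
    using assms unfolding in_sector_def by force
  have "r * sin \<theta> = 0" "r * cos \<theta> = -1"
    using \<open>1 + w = 0\<close> w by (auto simp: complex_eq_iff)
  moreover from this have "\<theta> = 0"
    using r \<theta> sin_zero_pi_iff[of \<theta>] by simp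
  ultimately show False
    using r by simp
qed

lemma in_sector_if_Re_pos:
  assumes "0 < Re w" and "0 \<le> a" and "a < pi/2" and "\<bar>Im w / Re w\<bar> \<le> tan a"
  shows "in_sector a w"
proof -
  have "\<bar>Arg w\<bar> = arctan \<bar>Im w / Re w\<bar>"
    using assms(1) by (simp add: arg_conv_arctan abs_if arctan_minus)
  also have "\<dots> \<le> arctan (tan a)"
    using assms(4) by (simp add: arctan_le_iff)
  also have "\<dots> = a"
    using assms(2,3) by (simp add: arctan_tan)
  finally show ?thesis
    unfolding in_sector_def using assms(1) rcis_cmod_Arg[of w]
    by (intro exI[of _ "cmod w"] exI[of _ "Arg w"]) auto
qed

lemma tan_double_half:
  assumes "0 < a" and "a < pi/2"
  shows "tan a = 2 * tan (a/2) / (1 - (tan (a/2))\<^sup>2)"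
proof -
  have "cos (a/2) \<noteq> 0" and "cos (2 * (a/2)) \<noteq> 0"
    using assms by (auto intro!: order.strict_implies_not_eq[symmetric] cos_gt_zero)
  then show ?thesis
    using tan_double[of "a/2"] by simp
qed

lemma cayley_in_sector:
  assumes "0 < a" and "a < pi/2" and "cmod z \<le> tan (a/2)"
  shows "in_sector a ((1 + z) / (1 - z))"
proof -
  define \<rho> where "\<rho> = tan (a/2)"
  define s where "s = cmod z"
  have "0 < \<rho>"
    unfolding \<rho>_def using assms by (intro tan_gt_zero) auto
  have "\<rho> < 1"
    using tan_monotone[of "a/2" "pi/4"] assms by (simp add: \<rho>_def tan_45)
  have "0 \<le> s" "s \<le> \<rho>" "s < 1"
    using assms(3) \<open>\<rho> < 1\<close> by (auto simp: s_def \<rho>_def)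
  then have "s\<^sup>2 < 1"
    by (simp add: power_less_one_iff)
  have "z \<noteq> 1"
    using \<open>s < 1\<close> s_def by auto
  define d where "d = (cmod (1 - z))\<^sup>2"
  have "0 < d"
    using \<open>z \<noteq> 1\<close> by (simp add: d_def)
  have Re_w: "Re ((1 + z) / (1 - z)) = (1 - s\<^sup>2) / d"
    and Im_w: "Im ((1 + z) / (1 - z)) = 2 * Im z / d"
    unfolding d_def s_def cmod_power2
    by (simp_all add: Re_divide Im_divide power2_eq_square algebra_simps)
  have "\<bar>Im ((1 + z) / (1 - z)) / Re ((1 + z) / (1 - z))\<bar> = 2 * \<bar>Im z\<bar> / (1 - s\<^sup>2)"
    unfolding Re_w Im_w using \<open>0 < d\<close> \<open>s\<^sup>2 < 1\<close> by (simp add: abs_divide abs_mult)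
  also have "\<dots> \<le> 2 * s / (1 - s\<^sup>2)"
    using abs_Im_le_cmod[of z] \<open>s\<^sup>2 < 1\<close> by (intro divide_right_mono) (auto simp: s_def)
  also have "\<dots> \<le> 2 * \<rho> / (1 - \<rho>\<^sup>2)"
  proof -
    have "2 * \<rho> * (1 - s\<^sup>2) - 2 * s * (1 - \<rho>\<^sup>2) = 2 * (\<rho> - s) * (1 + s * \<rho>)"
      by (simp add: power2_eq_square algebra_simps)
    also have "\<dots> \<ge> 0"
      using \<open>s \<le> \<rho>\<close> \<open>0 \<le> s\<close> \<open>0 < \<rho>\<close> by simp
    finally show ?thesis
      using \<open>s\<^sup>2 < 1\<close> \<open>0 < \<rho>\<close> \<open>\<rho> < 1\<close> by (simp add: field_simps power_less_one_iff)
  qed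
  also have "\<dots> = tan a"
    unfolding \<rho>_def using tan_double_half[OF assms(1,2)] by simp
  finally show ?thesis
    using assms \<open>0 < d\<close> \<open>s\<^sup>2 < 1\<close> by (intro in_sector_if_Re_pos) (auto simp: Re_w)
qed

lemma norm_inverse_cayley_le_1:
  assumes "0 \<le> Re w"
  shows "cmod ((w - 1) / (w + 1)) \<le> 1"
proof -
  have "(cmod (w + 1))\<^sup>2 - (cmod (w - 1))\<^sup>2 = 4 * Re w"
    unfolding cmod_power2 by (simp add: power2_eq_square algebra_simps)
  then have "(cmod (w - 1))\<^sup>2 \<le> (cmod (w + 1))\<^sup>2"
    using assms by linarith
  then have "cmod (w - 1) \<le> cmod (w + 1)"
    by (rule power2_le_imp_le) simp
  then show ?thesis
    by (simp add: norm_divide divide_le_eq_1)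
qed

lemma in_sector_telescope:
  assumes "finite S"
    and nonzero: "\<And>T. T \<subseteq> S \<Longrightarrow> f T \<noteq> 0"
    and step: "\<And>T h. T \<subseteq> S \<Longrightarrow> h \<in> S - T \<Longrightarrow> in_sector a (f T / f (insert h T))"
  shows "in_sector (real (card S) * a) (f {} / f S)"
  using assms(1) nonzero step
proof (induction S rule: finite_induct)
  case empty
  then show ?case
    using in_sector_1[of 0] by simp
next
  case (insert h S)
  have "f {} / f (insert h S) = f {} / f S * (f S / f (insert h S))"
    using insert.prems(1)[of S] by auto
  moreover have "in_sector (real (card S) * a) (f {} / f S)"
    using insert.prems by (intro insert.IH) auto
  moreover have "in_sector a (f S / f (insert h S))"
    using insert.prems(2)[of S h] insert.hyps(2) by blast
  ultimately have "in_sector (real (card S) * a + a) (f {} / f (insert h S))"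
    using in_sector_mult by metis
  then show ?case
    using insert.hyps by (simp add: algebra_simps)
qed

(* Boundary spins live on half-edges: (e, True) is the half of e at fst (ends e) and (e, False) the
   half at snd (ends e). Z_pinned sums over the spins of the free vertices V only; a half-edge whose
   endpoint is not free takes the spin tau gives to it, so two half-edges at the same pinned vertex
   may carry different spins. This is what allows a vertex to be switched one half-edge at a time. *)

definition endpoint :: "('e \<Rightarrow> 'v \<times> 'v) \<Rightarrow> 'e \<times> bool \<Rightarrow> 'v" where
  "endpoint ends h = (if snd h then fst (ends (fst h)) else snd (ends (fst h)))"

definition half_spin ::
    "'v set \<Rightarrow> ('e \<Rightarrow> 'v \<times> 'v) \<Rightarrow> ('e \<times> bool \<Rightarrow> nat) \<Rightarrow> ('v \<Rightarrow> nat) \<Rightarrow> 'e \<times> bool \<Rightarrow> nat" where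
  "half_spin V ends \<tau> \<sigma> h = (if endpoint ends h \<in> V then \<sigma> (endpoint ends h) else \<tau> h)"

definition edge_weight :: "complex \<Rightarrow> nat \<Rightarrow> nat \<Rightarrow> complex" where
  "edge_weight \<beta> x y = (if x = y then \<beta> else 1)"

definition Z_pinned ::
    "complex \<Rightarrow> 'v set \<Rightarrow> 'e set \<Rightarrow> ('e \<Rightarrow> 'v \<times> 'v) \<Rightarrow> ('e \<times> bool \<Rightarrow> nat) \<Rightarrow> complex" where
  "Z_pinned \<beta> V E ends \<tau> = (\<Sum>\<sigma>\<in>V \<rightarrow>\<^sub>E {0::nat, 1}.
     \<Prod>e\<in>E. edge_weight \<beta> (half_spin V ends \<tau> \<sigma> (e, True)) (half_spin V ends \<tau> \<sigma> (e, False)))"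

definition pin_vertex ::
    "('e \<Rightarrow> 'v \<times> 'v) \<Rightarrow> ('e \<times> bool \<Rightarrow> nat) \<Rightarrow> 'v \<Rightarrow> nat \<Rightarrow> 'e \<times> bool \<Rightarrow> nat" where
  "pin_vertex ends \<tau> u c = (\<lambda>h. if endpoint ends h = u then c else \<tau> h)"

definition pinned_ratio ::
    "complex \<Rightarrow> 'v set \<Rightarrow> 'e set \<Rightarrow> ('e \<Rightarrow> 'v \<times> 'v) \<Rightarrow> ('e \<times> bool \<Rightarrow> nat) \<Rightarrow> 'v \<Rightarrow> complex" where
  "pinned_ratio \<beta> V E ends \<tau> u =
     Z_pinned \<beta> V E ends (pin_vertex ends \<tau> u 0) / Z_pinned \<beta> V E ends (pin_vertex ends \<tau> u 1)"

lemma Z_Ising_eq_Z_pinned: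
  fixes V :: "'v set" and ends :: "'e \<Rightarrow> 'v \<times> 'v"
  assumes "is_multigraph V E ends"
  shows "Z_Ising V E ends \<beta> = Z_pinned \<beta> V E ends \<tau>"
  unfolding Z_Ising_def Z_pinned_def mono_edges_def
proof (rule sum.cong[OF refl])
  fix \<sigma> :: "'v \<Rightarrow> nat"
  have "finite E"
    using assms by (simp add: is_multigraph_def)
  have "(\<Prod>e\<in>E. edge_weight \<beta> (half_spin V ends \<tau> \<sigma> (e, True)) (half_spin V ends \<tau> \<sigma> (e, False)))
      = (\<Prod>e\<in>E. if \<sigma> (fst (ends e)) = \<sigma> (snd (ends e)) then \<beta> else 1)"
    using assms by (intro prod.cong refl)
      (auto simp: is_multigraph_def half_spin_def endpoint_def edge_weight_def)
  also have "\<dots> = (\<Prod>e\<in>{e\<in>E. \<sigma> (fst (ends e)) = \<sigma> (snd (ends e))}. \<beta>)"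
    by (rule prod.inter_filter[OF \<open>finite E\<close>, symmetric])
  finally show "\<beta> ^ card {e\<in>E. \<sigma> (fst (ends e)) = \<sigma> (snd (ends e))} =
      (\<Prod>e\<in>E. edge_weight \<beta> (half_spin V ends \<tau> \<sigma> (e, True)) (half_spin V ends \<tau> \<sigma> (e, False)))"
    by simp
qed

lemma Z_pinned_cong:
  assumes "\<And>e s. e \<in> E \<Longrightarrow> endpoint ends (e, s) \<notin> V \<Longrightarrow> \<tau> (e, s) = \<tau>' (e, s)"
  shows "Z_pinned \<beta> V E ends \<tau> = Z_pinned \<beta> V E ends \<tau>'"
  unfolding Z_pinned_def half_spin_def using assms by (intro sum.cong prod.cong refl) auto

lemma Z_pinned_empty_nonzero:
  assumes "finite E" and "\<beta> \<noteq> 0"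
  shows "Z_pinned \<beta> {} E ends \<tau> \<noteq> 0"
  using assms by (simp add: Z_pinned_def edge_weight_def prod_zero_iff)

lemma Z_pinned_split_vertex:
  assumes "x \<in> V"
  shows "Z_pinned \<beta> V E ends \<tau> =
    Z_pinned \<beta> (V - {x}) E ends (pin_vertex ends \<tau> x 0) +
    Z_pinned \<beta> (V - {x}) E ends (pin_vertex ends \<tau> x 1)"
proof -
  define V' where "V' = V - {x}"
  have V: "V = insert x V'" and "x \<notin> V'"
    using assms by (auto simp: V'_def)
  define F where "F W \<tau>' \<sigma> = (\<Prod>e\<in>E.
    edge_weight \<beta> (half_spin W ends \<tau>' \<sigma> (e, True)) (half_spin W ends \<tau>' \<sigma> (e, False)))" for W \<tau>' \<sigma>
  have half_spin_upd:
    "half_spin V ends \<tau> (\<sigma>(x := c)) = half_spin V' ends (pin_vertex ends \<tau> x c) \<sigma>" for \<sigma> c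
    using \<open>x \<notin> V'\<close> by (auto simp: V half_spin_def pin_vertex_def)
  have "Z_pinned \<beta> V E ends \<tau> =
      (\<Sum>\<sigma>\<in>(\<lambda>(c, \<sigma>). \<sigma>(x := c)) ` ({0::nat, 1} \<times> (V' \<rightarrow>\<^sub>E {0, 1})). F V \<tau> \<sigma>)"
    unfolding Z_pinned_def F_def V PiE_insert_eq by simp
  also have "\<dots> = (\<Sum>p\<in>{0::nat, 1} \<times> (V' \<rightarrow>\<^sub>E {0, 1}). F V \<tau> ((\<lambda>(c, \<sigma>). \<sigma>(x := c)) p))"
    by (rule sum.reindex[unfolded comp_def]) (rule inj_combinator[OF \<open>x \<notin> V'\<close>])
  also have "\<dots> = (\<Sum>c\<in>{0::nat, 1}. \<Sum>\<sigma>\<in>V' \<rightarrow>\<^sub>E {0, 1}. F V' (pin_vertex ends \<tau> x c) \<sigma>)"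
    by (simp add: sum.cartesian_product split_def F_def half_spin_upd)
  finally show ?thesis
    by (simp add: Z_pinned_def F_def V'_def)
qed

lemma Z_pinned_nonzero_if_pinned_ratio_in_sector:
  assumes "u \<in> V" and nonzero: "Z_pinned \<beta> (V - {u}) E ends (pin_vertex ends \<tau> u 1) \<noteq> 0"
    and "in_sector a (pinned_ratio \<beta> (V - {u}) E ends \<tau> u)" and "a < pi"
  shows "Z_pinned \<beta> V E ends \<tau> \<noteq> 0"
proof -
  let ?Y = "\<lambda>c. Z_pinned \<beta> (V - {u}) E ends (pin_vertex ends \<tau> u c)"
  have "1 + ?Y 0 / ?Y 1 \<noteq> 0"
    using assms(3,4) unfolding pinned_ratio_def by (rule in_sector_1_plus_nonzero)
  moreover have "Z_pinned \<beta> V E ends \<tau> = ?Y 1 * (1 + ?Y 0 / ?Y 1)"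
    using Z_pinned_split_vertex[OF \<open>u \<in> V\<close>, of \<beta> E ends \<tau>] nonzero by (simp add: field_simps)
  ultimately show ?thesis
    using nonzero by simp
qed

lemma Z_pinned_remove_edge:
  assumes "finite E" and "e \<in> E"
    and "endpoint ends (e, True) \<notin> V" and "endpoint ends (e, False) \<notin> V"
  shows "Z_pinned \<beta> V E ends \<tau> =
    edge_weight \<beta> (\<tau> (e, True)) (\<tau> (e, False)) * Z_pinned \<beta> V (E - {e}) ends \<tau>"
  unfolding Z_pinned_def sum_distrib_left
  using assms by (intro sum.cong refl) (simp add: prod.remove half_spin_def)

lemma Z_pinned_upd_half_edge_pinned_end:
  assumes "finite E" and "e \<in> E"
    and "endpoint ends (e, s) \<notin> V" and "endpoint ends (e, \<not> s) \<notin> V"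
  shows "Z_pinned \<beta> V E ends (\<tau>((e, s) := c)) =
    edge_weight \<beta> c (\<tau> (e, \<not> s)) * Z_pinned \<beta> V (E - {e}) ends \<tau>"
proof -
  let ?\<tau> = "\<tau>((e, s) := c)"
  have "endpoint ends (e, True) \<notin> V" and "endpoint ends (e, False) \<notin> V"
    using assms(3,4) by (cases s; simp add: endpoint_def)+
  then have "Z_pinned \<beta> V E ends ?\<tau> =
      edge_weight \<beta> (?\<tau> (e, True)) (?\<tau> (e, False)) * Z_pinned \<beta> V (E - {e}) ends ?\<tau>"
    by (rule Z_pinned_remove_edge[OF assms(1,2)])
  moreover have "edge_weight \<beta> (?\<tau> (e, True)) (?\<tau> (e, False)) = edge_weight \<beta> c (\<tau> (e, \<not> s))"
    by (cases s) (auto simp: edge_weight_def)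
  moreover have "Z_pinned \<beta> V (E - {e}) ends ?\<tau> = Z_pinned \<beta> V (E - {e}) ends \<tau>"
    by (rule Z_pinned_cong) auto
  ultimately show ?thesis
    by simp
qed

lemma Z_pinned_upd_half_edge_free_end:
  assumes "finite E" and "e \<in> E"
    and "endpoint ends (e, s) \<notin> V" and "endpoint ends (e, \<not> s) = y" and "y \<in> V"
  shows "Z_pinned \<beta> V E ends (\<tau>((e, s) := c)) =
    edge_weight \<beta> c 0 * Z_pinned \<beta> (V - {y}) (E - {e}) ends (pin_vertex ends \<tau> y 0) +
    edge_weight \<beta> c 1 * Z_pinned \<beta> (V - {y}) (E - {e}) ends (pin_vertex ends \<tau> y 1)"
proof -
  have "endpoint ends (e, s) \<noteq> y"
    using assms(3,5) by auto
  have "Z_pinned \<beta> (V - {y}) E ends (pin_vertex ends (\<tau>((e, s) := c)) y d) =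
      edge_weight \<beta> c d * Z_pinned \<beta> (V - {y}) (E - {e}) ends (pin_vertex ends \<tau> y d)" for d
  proof -
    let ?\<tau> = "pin_vertex ends (\<tau>((e, s) := c)) y d"
    have "endpoint ends (e, True) \<notin> V - {y}" and "endpoint ends (e, False) \<notin> V - {y}"
      using assms(3,4) by (cases s; auto simp: endpoint_def)+
    then have "Z_pinned \<beta> (V - {y}) E ends ?\<tau> =
        edge_weight \<beta> (?\<tau> (e, True)) (?\<tau> (e, False)) * Z_pinned \<beta> (V - {y}) (E - {e}) ends ?\<tau>"
      by (rule Z_pinned_remove_edge[OF assms(1,2)])
    moreover have "edge_weight \<beta> (?\<tau> (e, True)) (?\<tau> (e, False)) = edge_weight \<beta> c d"
      using \<open>endpoint ends (e, s) \<noteq> y\<close> assms(4)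
      by (cases s) (auto simp: pin_vertex_def endpoint_def edge_weight_def)
    moreover have "Z_pinned \<beta> (V - {y}) (E - {e}) ends ?\<tau> =
        Z_pinned \<beta> (V - {y}) (E - {e}) ends (pin_vertex ends \<tau> y d)"
      by (rule Z_pinned_cong) (auto simp: pin_vertex_def)
    ultimately show ?thesis
      by simp
  qed
  then show ?thesis
    using Z_pinned_split_vertex[OF assms(5), of \<beta> E ends "\<tau>((e, s) := c)"] by simp
qed

lemma degree_eq_card_half_edges:
  assumes "finite E"
  shows "degree E ends u = card {h. fst h \<in> E \<and> endpoint ends h = u}"
proof -
  have "{h. fst h \<in> E \<and> endpoint ends h = u} =
      (\<lambda>e. (e, True)) ` {e\<in>E. fst (ends e) = u} \<union> (\<lambda>e. (e, False)) ` {e\<in>E. snd (ends e) = u}"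
    by (auto simp: endpoint_def split: if_splits)
  moreover have "card \<dots> = card {e\<in>E. fst (ends e) = u} + card {e\<in>E. snd (ends e) = u}"
    using assms by (subst card_Un_disjoint) (auto simp: card_image inj_on_def)
  ultimately show ?thesis
    by (simp add: degree_def)
qed

lemma finite_half_edges: "finite E \<Longrightarrow> finite {h :: 'e \<times> bool. fst h \<in> E \<and> P h}"
  by (rule finite_subset[of _ "E \<times> (UNIV :: bool set)"]) auto

lemma degree_remove_edge_le:
  assumes "finite E"
  shows "degree (E - {e}) ends x \<le> degree E ends x"
  using assms by (simp add: degree_eq_card_half_edges) (intro card_mono finite_half_edges; auto)

lemma degree_remove_edge_less:
  assumes "finite E" and "e \<in> E" and "endpoint ends (e, s) = x"
  shows "degree (E - {e}) ends x < degree E ends x"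
proof -
  have "(e, s) \<in> {h. fst h \<in> E \<and> endpoint ends h = x} - {h. fst h \<in> E - {e} \<and> endpoint ends h = x}"
    using assms(2,3) by simp
  then have "{h. fst h \<in> E - {e} \<and> endpoint ends h = x} \<subset> {h. fst h \<in> E \<and> endpoint ends h = x}"
    by blast
  then show ?thesis
    using assms(1) by (simp add: degree_eq_card_half_edges psubset_card_mono finite_half_edges)
qed

definition zero_free_with_sector_ratios ::
    "complex \<Rightarrow> real \<Rightarrow> nat \<Rightarrow> ('e \<Rightarrow> 'v \<times> 'v) \<Rightarrow> 'v set \<Rightarrow> bool" where
  "zero_free_with_sector_ratios \<beta> \<alpha> D ends V \<longleftrightarrow>
     (\<forall>E \<tau>. finite E \<longrightarrow> (\<forall>x\<in>V. degree E ends x \<le> D) \<longrightarrow>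
       Z_pinned \<beta> V E ends \<tau> \<noteq> 0 \<and>
       (\<forall>u\<in>V. in_sector (real (degree E ends u) * \<alpha>) (pinned_ratio \<beta> (V - {u}) E ends \<tau> u)))"

lemma zero_free_with_sector_ratiosD:
  assumes "zero_free_with_sector_ratios \<beta> \<alpha> D ends V"
    and "finite E" and "\<forall>x\<in>V. degree E ends x \<le> D"
  shows "Z_pinned \<beta> V E ends \<tau> \<noteq> 0"
    and "u \<in> V \<Longrightarrow> in_sector (real (degree E ends u) * \<alpha>) (pinned_ratio \<beta> (V - {u}) E ends \<tau> u)"
  using assms unfolding zero_free_with_sector_ratios_def by blast+

context
  fixes ends :: "'e \<Rightarrow> 'v \<times> 'v" and D :: nat and \<alpha> :: real and t \<beta> :: complex
  assumes \<alpha>_pos: "0 < \<alpha>" and \<alpha>_less: "\<alpha> < pi/2" and D_\<alpha>: "(real D - 1) * \<alpha> \<le> pi/2"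
    and norm_t_le: "cmod t \<le> tan (\<alpha>/2)" and \<beta>_eq: "\<beta> = (1 + t) / (1 - t)"
begin

lemma norm_t_less_1: "cmod t < 1"
  using norm_t_le tan_monotone[of "\<alpha>/2" "pi/4"] \<alpha>_pos \<alpha>_less by (simp add: tan_45)

lemma \<beta>_in_sector: "in_sector \<alpha> \<beta>"
  unfolding \<beta>_eq using \<alpha>_pos \<alpha>_less norm_t_le by (rule cayley_in_sector)

lemma edge_weight_ratio_in_sector: "in_sector \<alpha> (edge_weight \<beta> 0 c / edge_weight \<beta> 1 c)"
proof -
  have "in_sector \<alpha> ((1 + - t) / (1 - - t))"
    using \<alpha>_pos \<alpha>_less norm_t_le by (intro cayley_in_sector) auto
  then have "in_sector \<alpha> (1 / \<beta>)"
    by (simp add: \<beta>_eq)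
  then show ?thesis
    using \<beta>_in_sector in_sector_1[of \<alpha>] \<alpha>_pos by (auto simp: edge_weight_def)
qed

lemma moebius_right_half_plane_in_sector:
  assumes "0 \<le> Re R"
  shows "in_sector \<alpha> ((\<beta> * R + 1) / (R + \<beta>))"
proof -
  (* the map is the Cayley transform of t m, where m, the inverse Cayley transform of R,
     lies in the closed unit disc *)
  define m where "m = (R - 1) / (R + 1)"
  have "R + 1 \<noteq> 0"
    using assms by (auto simp: complex_eq_iff)
  have "1 - t \<noteq> 0"
    using norm_t_less_1 by auto
  have "cmod (t * m) \<le> cmod t"
    using norm_inverse_cayley_le_1[OF assms] unfolding m_def norm_mult by (intro mult_left_le) auto
  have "\<beta> * (1 - t) = 1 + t" and "m * (R + 1) = R - 1"
    using \<open>1 - t \<noteq> 0\<close> \<open>R + 1 \<noteq> 0\<close> by (simp_all add: \<beta>_eq m_def)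
  then have "(\<beta> * R + 1) * (1 - t) = (1 + t * m) * (R + 1)"
    and "(R + \<beta>) * (1 - t) = (1 - t * m) * (R + 1)"
    by algebra+
  then have "(\<beta> * R + 1) / (R + \<beta>) = (1 + t * m) / (1 - t * m)"
    using \<open>1 - t \<noteq> 0\<close> \<open>R + 1 \<noteq> 0\<close> by (metis mult_divide_mult_cancel_right)
  then show ?thesis
    using \<alpha>_pos \<alpha>_less \<open>cmod (t * m) \<le> cmod t\<close> norm_t_le by (simp add: cayley_in_sector)
qed

lemma half_edge_upd_ratio_in_sector:
  assumes zero_free: "zero_free_with_sector_ratios \<beta> \<alpha> D ends V"
    and "finite E" and deg: "\<forall>x\<in>V. degree E ends x \<le> D"
    and "e \<in> E" and "endpoint ends (e, s) \<notin> V"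
  shows "in_sector \<alpha> (Z_pinned \<beta> V E ends (\<tau>((e, s) := 0)) / Z_pinned \<beta> V E ends (\<tau>((e, s) := 1)))"
proof -
  have "\<forall>x\<in>V. degree (E - {e}) ends x \<le> D"
    by (meson deg degree_remove_edge_le[OF \<open>finite E\<close>] le_trans)
  note IH = zero_free_with_sector_ratiosD[OF zero_free finite_Diff[OF \<open>finite E\<close>] this]
  show ?thesis
  proof (cases "endpoint ends (e, \<not> s) \<in> V")
    case False
    then show ?thesis
      using Z_pinned_upd_half_edge_pinned_end[OF \<open>finite E\<close> \<open>e \<in> E\<close> \<open>endpoint ends (e, s) \<notin> V\<close>]
        IH(1)[of \<tau>] edge_weight_ratio_in_sector by simp
  next
    case True
    define y where "y = endpoint ends (e, \<not> s)"
    define Y where "Y c = Z_pinned \<beta> (V - {y}) (E - {e}) ends (pin_vertex ends \<tau> y c)" for c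
    have "y \<in> V"
      using True y_def by simp
    have "degree (E - {e}) ends y < degree E ends y"
      using degree_remove_edge_less[OF \<open>finite E\<close> \<open>e \<in> E\<close> y_def[symmetric]] .
    with deg \<open>y \<in> V\<close> have "real (degree (E - {e}) ends y) \<le> real D - 1"
      by fastforce
    then have "real (degree (E - {e}) ends y) * \<alpha> \<le> (real D - 1) * \<alpha>"
      using \<alpha>_pos by (intro mult_right_mono) auto
    then have "in_sector (pi/2) (Y 0 / Y 1)"
      using IH(2)[OF \<open>y \<in> V\<close>, of \<tau>] in_sector_mono D_\<alpha>
      unfolding Y_def pinned_ratio_def by fastforce
    then have "0 \<le> Re (Y 0 / Y 1)" and "Y 0 / Y 1 \<noteq> 0"
      by (auto dest: in_sector_Re_nonneg in_sector_nonzero)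
    then have "Y 1 \<noteq> 0"
      by auto
    have "Z_pinned \<beta> V E ends (\<tau>((e, s) := c)) = edge_weight \<beta> c 0 * Y 0 + edge_weight \<beta> c 1 * Y 1" for c
      unfolding Y_def using \<open>finite E\<close> \<open>e \<in> E\<close> \<open>endpoint ends (e, s) \<notin> V\<close> y_def[symmetric] \<open>y \<in> V\<close>
      by (rule Z_pinned_upd_half_edge_free_end)
    then have "Z_pinned \<beta> V E ends (\<tau>((e, s) := 0)) / Z_pinned \<beta> V E ends (\<tau>((e, s) := 1)) =
        ((\<beta> * (Y 0 / Y 1) + 1) * Y 1) / ((Y 0 / Y 1 + \<beta>) * Y 1)"
      using \<open>Y 1 \<noteq> 0\<close> by (simp add: edge_weight_def distrib_right)
    also have "\<dots> = (\<beta> * (Y 0 / Y 1) + 1) / (Y 0 / Y 1 + \<beta>)"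
      using \<open>Y 1 \<noteq> 0\<close> by (rule mult_divide_mult_cancel_right)
    finally show ?thesis
      using moebius_right_half_plane_in_sector[OF \<open>0 \<le> Re (Y 0 / Y 1)\<close>] by simp
  qed
qed

lemma pinned_ratio_in_sector:
  assumes zero_free: "zero_free_with_sector_ratios \<beta> \<alpha> D ends W"
    and "finite E" and deg: "\<forall>x\<in>W. degree E ends x \<le> D" and "u \<notin> W"
  shows "in_sector (real (degree E ends u) * \<alpha>) (pinned_ratio \<beta> W E ends \<tau> u)"
proof -
  define H where "H = {h. fst h \<in> E \<and> endpoint ends h = u}"
  define pin_set where
    "pin_set S h = (if endpoint ends h = u then (if h \<in> S then 1 else 0) else \<tau> h)" for S h
  have "in_sector (real (card H) * \<alpha>)
      (Z_pinned \<beta> W E ends (pin_set {}) / Z_pinned \<beta> W E ends (pin_set H))"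
  proof (rule in_sector_telescope)
    show "finite H"
      unfolding H_def using \<open>finite E\<close> by (rule finite_half_edges)
    show "Z_pinned \<beta> W E ends (pin_set T) \<noteq> 0" for T
      by (rule zero_free_with_sector_ratiosD(1)[OF zero_free \<open>finite E\<close> deg])
    show "in_sector \<alpha> (Z_pinned \<beta> W E ends (pin_set T) / Z_pinned \<beta> W E ends (pin_set (insert h T)))"
      if "T \<subseteq> H" and "h \<in> H - T" for T h
    proof -
      obtain e s where h: "h = (e, s)" and "e \<in> E" and "endpoint ends (e, s) = u"
        using \<open>h \<in> H - T\<close> by (cases h) (auto simp: H_def)
      have "pin_set T = (pin_set T)((e, s) := 0)"
        and "pin_set (insert h T) = (pin_set T)((e, s) := 1)"
        using that h \<open>endpoint ends (e, s) = u\<close> by (auto simp: pin_set_def)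
      then show ?thesis
        using half_edge_upd_ratio_in_sector[OF zero_free \<open>finite E\<close> deg \<open>e \<in> E\<close>]
          \<open>endpoint ends (e, s) = u\<close> \<open>u \<notin> W\<close>
        by metis
    qed
  qed
  moreover have "pin_set {} = pin_vertex ends \<tau> u 0"
    by (auto simp: pin_set_def pin_vertex_def)
  moreover have "Z_pinned \<beta> W E ends (pin_set H) = Z_pinned \<beta> W E ends (pin_vertex ends \<tau> u 1)"
    by (rule Z_pinned_cong) (auto simp: pin_set_def pin_vertex_def H_def)
  ultimately show ?thesis
    using \<open>finite E\<close> by (simp add: H_def pinned_ratio_def degree_eq_card_half_edges)
qed

lemma zero_free_with_sector_ratios_if_finite:
  assumes "finite V"
  shows "zero_free_with_sector_ratios \<beta> \<alpha> D ends V"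
  using assms
proof (induction V rule: finite_psubset_induct)
  case (psubset V)
  have IH: "zero_free_with_sector_ratios \<beta> \<alpha> D ends (V - {u})" if "u \<in> V" for u
    using psubset that by blast
  have ratio: "in_sector (real (degree E ends u) * \<alpha>) (pinned_ratio \<beta> (V - {u}) E ends \<tau> u)"
    if "u \<in> V" and "finite E" and "\<forall>x\<in>V. degree E ends x \<le> D" for u E \<tau>
    using IH[OF \<open>u \<in> V\<close>] that by (intro pinned_ratio_in_sector) auto
  have "Z_pinned \<beta> V E ends \<tau> \<noteq> 0" if "finite E" and deg: "\<forall>x\<in>V. degree E ends x \<le> D" for E \<tau>
  proof (cases "V = {}")
    case True
    then show ?thesis
      using Z_pinned_empty_nonzero[OF \<open>finite E\<close>] in_sector_nonzero[OF \<beta>_in_sector] by simp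
  next
    case False
    then obtain u where "u \<in> V"
      by auto
    have "\<forall>x\<in>V - {u}. degree E ends x \<le> D"
      using deg by blast
    with IH[OF \<open>u \<in> V\<close>] \<open>finite E\<close> have nonzero: "Z_pinned \<beta> (V - {u}) E ends (pin_vertex ends \<tau> u 1) \<noteq> 0"
      by (rule zero_free_with_sector_ratiosD(1))
    have "real (degree E ends u) * \<alpha> \<le> real D * \<alpha>"
      using deg \<open>u \<in> V\<close> \<alpha>_pos by (intro mult_right_mono) auto
    with D_\<alpha> \<alpha>_less have "real (degree E ends u) * \<alpha> < pi"
      by (simp add: algebra_simps)
    with \<open>u \<in> V\<close> nonzero ratio[OF \<open>u \<in> V\<close> that] show ?thesis
      by (rule Z_pinned_nonzero_if_pinned_ratio_in_sector)
  qed
  with ratio show ?case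
    unfolding zero_free_with_sector_ratios_def by blast
qed

end

theorem theorem1p1:
  fixes \<Delta> :: nat and V :: "'v set" and E :: "'e set" and ends :: "'e \<Rightarrow> 'v \<times> 'v"
    and \<beta> :: complex
  assumes "\<Delta> \<ge> 3"
    and "is_multigraph V E ends"
    and "\<forall>v\<in>V. degree E ends v \<le> \<Delta>"
    and "\<beta> \<noteq> -1"
    and "cmod (\<beta> - 1) / cmod (\<beta> + 1) \<le> tan (pi / (4 * (real \<Delta> - 1)))"
  shows "Z_Ising V E ends \<beta> \<noteq> 0"
proof -
  define \<alpha> where "\<alpha> = pi / (2 * (real \<Delta> - 1))"
  define t where "t = (\<beta> - 1) / (\<beta> + 1)"
  have "(real \<Delta> - 1) * \<alpha> = pi/2" and "0 < \<alpha>" and "\<alpha> < pi/2"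
    using assms(1) by (auto simp: \<alpha>_def field_simps)
  moreover have "cmod t \<le> tan (\<alpha>/2)"
    using assms(5) by (simp add: t_def \<alpha>_def norm_divide)
  moreover have "\<beta> = (1 + t) / (1 - t)"
    using assms(4) by (simp add: t_def field_simps add_eq_0_iff)
  moreover have "finite V" and "finite E"
    using assms(2) by (auto simp: is_multigraph_def)
  ultimately have "zero_free_with_sector_ratios \<beta> \<alpha> \<Delta> ends V"
    by (intro zero_free_with_sector_ratios_if_finite) auto
  then have "Z_pinned \<beta> V E ends (\<lambda>_. 0) \<noteq> 0"
    using \<open>finite E\<close> assms(3) by (rule zero_free_with_sector_ratiosD(1))
  then show ?thesis
    using Z_Ising_eq_Z_pinned[OF assms(2)] by simp
qed

end
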